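(* Let $\mathbb{Z}$ be a finite-dimensional Euclidean space, $E:\mathbb{Z}\rightrightarrows\mathbb{Z}$ maximally monotone, and $F_i:\mathbb{Z}\to\mathbb{Z}$ ($i=1,\dots,N$) maximally monotone and $\frac1{L_0}$-co-coercive, $L_0>0$; let $F=\frac1N\sum_{i=1}^N F_i$. Let $\alpha\in(0,4/L_0)$, $L:=\frac{4}{\alpha(4-\alpha L_0)}$, and $G(z):=\frac1\alpha\big(z-J_{\alpha E}(z-\alpha F(z))\big)$; assume $G(z^* )=0$ for some $z^*$. Let $\sigma_k,\gamma_k\ge0$ and let $\{z^k\}$ be generated from $z^0$ by: for $k\ge0$, (i) take a stochastic estimator $\widetilde F(z^k)$ with $\mathbb{E}\|F(z^k)-\widetilde F(z^k)\|^2\le\frac12\sigma_k^2$; (ii) take $\bar z^k$ with $\|J_{\alpha E}(z^k-\alpha\widetilde F(z^k))-\bar z^k\|\le\frac{\sqrt2}{2}\alpha\gamma_k$; (iii) set $\tilde z^k=\frac1\alpha(z^k-\bar z^k)$ and $z^{k+1}=\beta_kz^0+(1-\beta_k)z^k-\eta_k\tilde z^k$, with $\beta_k=1/(k+2)$, $\eta_k=(1-\beta_k)/L$. Then for all $k\ge0$, \[ \mathbb{E}\|G(z^k)\|^2\le\frac{\Big(7L\|z^0-z^*\|+10\sqrt{\sum_{i=0}^{k-1}(i+1)^2(\sigma_i+\gamma_i)^2}\Big)^2}{(k+1)(k+2)},\quad \mathbb{E}\|z^{k+1}-z^k\|^2\le\frac{8\Big(7L\|z^0-z^*\|+11\sqrt{\sum_{i=0}^{k}(i+1)^2(\sigma_i+\gamma_i)^2}\Big)^2}{L^2(k+1)(k+2)}.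 \]
   Context: $c$-co-coercive means $\langle F(x_1)-F(x_2),x_1-x_2\rangle\ge c\|F(x_1)-F(x_2)\|^2$. $J_{\alpha E}=(I+\alpha E)^{-1}$ is the resolvent (single-valued). $\mathbb{E}$ denotes expectation with respect to all randomness in the iterations. *)

theory Defs
  imports "HOL-Analysis.Analysis" "HOL-Probability.Probability"
begin

definition monotone_op :: "('a::real_inner \<Rightarrow> 'a set) \<Rightarrow> bool" where
  "monotone_op A \<longleftrightarrow>
     (\<forall>x y u v. u \<in> A x \<longrightarrow> v \<in> A y \<longrightarrow> inner (u - v) (x - y) \<ge> 0)"

definition max_monotone_op :: "('a::real_inner \<Rightarrow> 'a set) \<Rightarrow> bool" where
  "max_monotone_op A \<longleftrightarrow> monotone_op A \<and>
     (\<forall>B. monotone_op B \<and> (\<forall>x. A x \<subseteq> B x) \<longrightarrow> B = A)"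

definition sv_op :: "('a \<Rightarrow> 'a) \<Rightarrow> 'a \<Rightarrow> 'a set" where
  "sv_op f = (\<lambda>x. {f x})"

definition cocoercive :: "real \<Rightarrow> ('a::real_inner \<Rightarrow> 'a) \<Rightarrow> bool" where
  "cocoercive c f \<longleftrightarrow>
     (\<forall>x1 x2. inner (f x1 - f x2) (x1 - x2) \<ge> c * (norm (f x1 - f x2))\<^sup>2)"

text \<open>Resolvent J_{\<alpha>E} = (I + \<alpha>E)^{-1}: J x is the (unique, for maximally monotone E)
  y with x \<in> y + \<alpha> E(y).\<close>
definition resolvent :: "real \<Rightarrow> ('a::real_inner \<Rightarrow> 'a set) \<Rightarrow> 'a \<Rightarrow> 'a" where
  "resolvent \<alpha> E x = (THE y. (1 / \<alpha>) *\<^sub>R (x - y) \<in> E y)"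

end

(* The forward-backward residual G is (1/L)-co-coercive: the resolvent of E is everywhere
   defined and firmly nonexpansive (Minty's theorem, obtained from the Debrunner-Flor extension
   lemma and compactness) and the average F is (1/L0)-co-coercive. Hence the scheme is a Halpern
   iteration z(k+1) = beta_k z0 + (1 - beta_k) (z k - g (z k) - delta k) for the firmly
   nonexpansive g = G/L, whose errors satisfy |L delta k|^2 <= 2 |F (z k) - Ft k|^2 + gamma_k^2.
   Along every sample path the potential (k+1) <g (z k), z k - z0> + k(k+1)/2 |g (z k)|^2 grows
   only by terms quadratic in the errors, and co-coercivity at the root bounds it from below;
   a strong induction then gives
     (k+1)(k+2) |g (z k)|^2 <= 8 |z0 - zs|^2 + 40 sum_i (i+1)^2 |delta i|^2,
   and the step bound follows with |z k - zs| <= |z0 - zs| + sum_i |delta i|. Both pathwise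
   bounds are affine in the squared estimator errors, so taking expectations gives the theorem. *)

theory Submission
  imports Defs
begin

section \<open>Minty's theorem\<close>

lemma nonneg_if_linear_quadratic_nonneg:
  fixes D Q :: real
  assumes "\<And>t. 0 < t \<Longrightarrow> t \<le> 1 \<Longrightarrow> 0 \<le> t * D + t\<^sup>2 * Q"
  shows "0 \<le> D"
proof (rule ccontr)
  assume "\<not> 0 \<le> D"
  define c where "c = 2 * (\<bar>Q\<bar> + 1)"
  define t where "t = min 1 (- D / c)"
  have "0 < c" by (simp add: c_def add_pos_nonneg)
  then have t: "0 < t" "t \<le> 1"
    using \<open>\<not> 0 \<le> D\<close> by (auto simp: t_def divide_neg_pos)
  have "t * c \<le> (- D / c) * c"
    using \<open>0 < c\<close> by (intro mult_right_mono) (auto simp: t_def)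
  also have "\<dots> = - D" using \<open>0 < c\<close> by simp
  finally have "2 * (t * \<bar>Q\<bar>) + 2 * t \<le> - D" by (simp add: c_def algebra_simps)
  then have "D + t * Q < 0"
    using t \<open>\<not> 0 \<le> D\<close> abs_ge_self[of Q] mult_left_mono[of Q "\<bar>Q\<bar>" t] by linarith
  then have "t * D + t\<^sup>2 * Q < 0"
    using t by (simp add: power2_eq_square distrib_left[symmetric] mult.assoc mult_pos_neg)
  with assms[OF t] show False by simp
qed

lemma convex_hull_finite_image_weights:
  fixes f :: "'i \<Rightarrow> 'a::real_vector"
  assumes "finite P" and "v \<in> convex hull (f ` P)"
  obtains \<mu> where "\<And>p. p \<in> P \<Longrightarrow> 0 \<le> \<mu> p" "sum \<mu> P = 1" "v = (\<Sum>p\<in>P. \<mu> p *\<^sub>R f p)"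
proof -
  define K where "K = {v. \<exists>\<mu>. (\<forall>p\<in>P. 0 \<le> \<mu> p) \<and> sum \<mu> P = 1 \<and> v = (\<Sum>p\<in>P. \<mu> p *\<^sub>R f p)}"
  have "convex K"
  proof (rule convexI)
    fix u1 u2 and a b :: real
    assume "u1 \<in> K" "u2 \<in> K" and ab: "0 \<le> a" "0 \<le> b" "a + b = 1"
    then obtain \<mu>1 \<mu>2 where
      "\<forall>p\<in>P. 0 \<le> \<mu>1 p" "sum \<mu>1 P = 1" "u1 = (\<Sum>p\<in>P. \<mu>1 p *\<^sub>R f p)"
      "\<forall>p\<in>P. 0 \<le> \<mu>2 p" "sum \<mu>2 P = 1" "u2 = (\<Sum>p\<in>P. \<mu>2 p *\<^sub>R f p)"
      unfolding K_def by blast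
    with ab show "a *\<^sub>R u1 + b *\<^sub>R u2 \<in> K"
      unfolding K_def
      by (intro CollectI exI[of _ "\<lambda>p. a * \<mu>1 p + b * \<mu>2 p"])
         (simp add: sum.distrib scaleR_add_left scaleR_sum_right sum_distrib_left[symmetric])
  qed
  moreover have "f ` P \<subseteq> K"
  proof
    fix u assume "u \<in> f ` P"
    then obtain q where "q \<in> P" "u = f q" by blast
    then show "u \<in> K"
      unfolding K_def using assms(1)
      by (intro CollectI exI[of _ "\<lambda>p. if p = q then 1 else 0"])
         (simp add: if_distrib[of "\<lambda>c. c *\<^sub>R _"] cong: if_cong)
  qed
  ultimately have "convex hull (f ` P) \<subseteq> K" by (rule hull_minimal[rotated])
  with assms(2) that show ?thesis unfolding K_def by blast
qed

lemma monotone_weighted_sum_nonneg: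
  fixes P :: "('a::real_inner \<times> 'a) set"
  assumes "finite P"
    and mono: "\<And>p q. p \<in> P \<Longrightarrow> q \<in> P \<Longrightarrow> 0 \<le> inner (snd p - snd q) (fst p - fst q)"
    and \<mu>: "\<And>p. p \<in> P \<Longrightarrow> 0 \<le> \<mu> p" "sum \<mu> P = 1"
  shows "0 \<le> (\<Sum>p\<in>P. \<mu> p * inner (snd p) (fst p - (\<Sum>q\<in>P. \<mu> q *\<^sub>R fst q)))"
proof -
  define T where "T = (\<Sum>p\<in>P. \<Sum>q\<in>P. \<mu> p * \<mu> q * inner (snd p) (fst p - fst q))"
  have "fst p - (\<Sum>q\<in>P. \<mu> q *\<^sub>R fst q) = (\<Sum>q\<in>P. \<mu> q *\<^sub>R (fst p - fst q))" for p :: "'a \<times> 'a"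
    using \<mu>(2) by (simp add: scaleR_right_diff_distrib sum_subtractf flip: scaleR_sum_left)
  then have T_eq: "(\<Sum>p\<in>P. \<mu> p * inner (snd p) (fst p - (\<Sum>q\<in>P. \<mu> q *\<^sub>R fst q))) = T"
    unfolding T_def by (simp add: inner_sum_right sum_distrib_left mult.assoc)
  have T_swap: "T = (\<Sum>p\<in>P. \<Sum>q\<in>P. \<mu> q * \<mu> p * inner (snd q) (fst q - fst p))"
    unfolding T_def by (rule sum.swap)
  have "2 * T = T + T" by simp
  also have "\<dots> = (\<Sum>p\<in>P. \<Sum>q\<in>P. \<mu> p * \<mu> q * inner (snd p) (fst p - fst q)
                                 + \<mu> q * \<mu> p * inner (snd q) (fst q - fst p))"
    by (subst T_swap) (simp add: T_def sum.distrib)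
  also have "\<dots> = (\<Sum>p\<in>P. \<Sum>q\<in>P. \<mu> p * \<mu> q * inner (snd p - snd q) (fst p - fst q))"
    by (intro sum.cong refl) (simp add: inner_diff_left inner_diff_right algebra_simps)
  also have "\<dots> \<ge> 0" using \<mu> mono by (intro sum_nonneg) auto
  finally show ?thesis using T_eq by simp
qed

lemma convex_hull_monotone_quadratic_nonneg:
  fixes P :: "('a::real_inner \<times> 'a) set" and x0 :: 'a
  assumes "finite P"
    and mono: "\<And>p q. p \<in> P \<Longrightarrow> q \<in> P \<Longrightarrow> 0 \<le> inner (snd p - snd q) (fst p - fst q)"
    and "v \<in> convex hull ((\<lambda>p. (x0 - snd p + fst p, inner (x0 - snd p) (fst p))) ` P)"
  shows "snd v \<le> (norm (fst v))\<^sup>2 / 4"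
proof -
  obtain \<mu> where \<mu>: "\<And>p. p \<in> P \<Longrightarrow> 0 \<le> \<mu> p" "sum \<mu> P = 1"
    and v_eq: "v = (\<Sum>p\<in>P. \<mu> p *\<^sub>R (x0 - snd p + fst p, inner (x0 - snd p) (fst p)))"
    using convex_hull_finite_image_weights[OF assms(1,3)] by blast
  define xb where "xb = (\<Sum>p\<in>P. \<mu> p *\<^sub>R fst p)"
  have "0 \<le> (\<Sum>p\<in>P. \<mu> p * inner (snd p) (fst p - xb))"
    unfolding xb_def using \<open>finite P\<close> mono \<mu> by (rule monotone_weighted_sum_nonneg)
  also have "\<dots> = inner (fst v) xb - snd v - (norm xb)\<^sup>2"
  proof -
    have "fst v = x0 - (\<Sum>p\<in>P. \<mu> p *\<^sub>R snd p) + xb"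
      using \<mu>(2)
      by (simp add: v_eq xb_def fst_sum scaleR_add_right scaleR_diff_right sum.distrib
          sum_subtractf flip: scaleR_sum_left)
    moreover have "snd v = inner x0 xb - (\<Sum>p\<in>P. \<mu> p * inner (snd p) (fst p))"
      by (simp add: v_eq xb_def snd_sum inner_sum_right inner_diff_left right_diff_distrib
          sum_subtractf)
    ultimately show ?thesis
      by (simp add: power2_norm_eq_inner inner_diff_left inner_diff_right inner_add_left
          inner_sum_left right_diff_distrib sum_subtractf)
  qed
  also have "\<dots> = (norm (fst v))\<^sup>2 / 4 - snd v - (norm ((1/2) *\<^sub>R fst v - xb))\<^sup>2"
    by (simp add: power2_norm_eq_inner inner_diff_left inner_diff_right inner_commute algebra_simps)
  finally show ?thesis by (smt (verit) zero_le_power2)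
qed

lemma convex_argmin_quadratic_first_order:
  fixes C :: "('a::real_inner \<times> real) set"
  assumes "convex C" "v \<in> C" "w \<in> C"
    and v_min: "\<And>u. u \<in> C \<Longrightarrow> (norm (fst v))\<^sup>2 / 4 - snd v \<le> (norm (fst u))\<^sup>2 / 4 - snd u"
  shows "snd w - inner (fst w) (fst v) / 2 \<le> snd v - (norm (fst v))\<^sup>2 / 2"
proof -
  define H where "H u = (norm (fst u))\<^sup>2 / 4 - snd u" for u :: "'a \<times> real"
  define D where "D = inner (fst v) (fst w - fst v) / 2 - (snd w - snd v)"
  have "0 \<le> D"
  proof (rule nonneg_if_linear_quadratic_nonneg)
    fix t :: real assume "0 < t" "t \<le> 1"
    have "v + t *\<^sub>R (w - v) = (1 - t) *\<^sub>R v + t *\<^sub>R w" by (simp add: algebra_simps)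
    also have "\<dots> \<in> C"
      using assms(1-3) \<open>0 < t\<close> \<open>t \<le> 1\<close> by (intro convexD) auto
    finally have "H v \<le> H (v + t *\<^sub>R (w - v))" unfolding H_def by (rule v_min)
    also have "H (v + t *\<^sub>R (w - v)) = H v + (t * D + t\<^sup>2 * ((norm (fst w - fst v))\<^sup>2 / 4))"
      unfolding H_def D_def power2_norm_eq_inner
      by (simp add: inner_add_left inner_add_right inner_diff_left inner_diff_right inner_commute
          power2_eq_square algebra_simps add_divide_distrib)
         (simp add: field_simps)
    finally show "0 \<le> t * D + t\<^sup>2 * ((norm (fst w - fst v))\<^sup>2 / 4)" by simp
  qed
  then show ?thesis
    by (simp add: D_def power2_norm_eq_inner inner_diff_right inner_commute)
qed

lemma monotone_finite_extension:
  fixes P :: "('a::real_inner \<times> 'a) set" and x0 :: 'a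
  assumes "finite P"
    and mono: "\<And>p q. p \<in> P \<Longrightarrow> q \<in> P \<Longrightarrow> 0 \<le> inner (snd p - snd q) (fst p - fst q)"
  obtains y where "\<And>p. p \<in> P \<Longrightarrow> 0 \<le> inner (x0 - y - snd p) (y - fst p)"
proof (cases "P = {}")
  case True
  then show ?thesis using that by blast
next
  case False
  \<comment> \<open>The condition for \<open>p\<close> reads \<open>\<langle>fst (f p), y\<rangle> - snd (f p) - \<parallel>y\<parallel>\<^sup>2 \<ge> 0\<close>, whose supremum
      over \<open>y\<close> is \<open>H (f p)\<close>, attained at \<open>y = fst (f p) / 2\<close>; take \<open>y\<close> from a minimiser of \<open>H\<close>
      on the convex hull of \<open>f ` P\<close>.\<close>
  define f where "f p = (x0 - snd p + fst p, inner (x0 - snd p) (fst p))" for p :: "'a \<times> 'a"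
  define H where "H u = (norm (fst u))\<^sup>2 / 4 - snd u" for u :: "'a \<times> real"
  define C where "C = convex hull (f ` P)"
  have "compact C" by (simp add: C_def \<open>finite P\<close> finite_imp_compact_convex_hull)
  moreover have "C \<noteq> {}" using False by (simp add: C_def)
  moreover have "continuous_on C H" unfolding H_def by (intro continuous_intros) auto
  ultimately obtain v where "v \<in> C" and v_min: "\<And>u. u \<in> C \<Longrightarrow> H v \<le> H u"
    using continuous_attains_inf[of C H] by blast
  have "snd v \<le> (norm (fst v))\<^sup>2 / 4"
    using \<open>finite P\<close> mono \<open>v \<in> C\<close> unfolding C_def f_def
    by (rule convex_hull_monotone_quadratic_nonneg)
  show ?thesis
  proof (rule that)
    fix p assume "p \<in> P"
    then have "f p \<in> C" unfolding C_def by (intro hull_inc) auto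
    then have "snd (f p) - inner (fst (f p)) (fst v) / 2 \<le> snd v - (norm (fst v))\<^sup>2 / 2"
      using v_min \<open>v \<in> C\<close> unfolding C_def H_def
      by (intro convex_argmin_quadratic_first_order) auto
    moreover have "inner (x0 - (1/2) *\<^sub>R fst v - snd p) ((1/2) *\<^sub>R fst v - fst p)
        = inner (fst (f p)) (fst v) / 2 - snd (f p) - (norm (fst v))\<^sup>2 / 4"
      unfolding f_def
      by (simp add: power2_norm_eq_inner inner_diff_left inner_diff_right inner_add_left
          inner_add_right inner_commute algebra_simps) (simp add: field_simps)
    ultimately show "0 \<le> inner (x0 - (1/2) *\<^sub>R fst v - snd p) ((1/2) *\<^sub>R fst v - fst p)"
      using \<open>snd v \<le> (norm (fst v))\<^sup>2 / 4\<close> by linarith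
  qed
qed

lemma inner_nonneg_subset_cball:
  fixes a b :: "'a::real_inner"
  shows "{y. 0 \<le> inner (a - y) (y - b)} \<subseteq> cball ((1/2) *\<^sub>R (a + b)) (norm (a - b) / 2)"
proof
  fix y assume "y \<in> {y. 0 \<le> inner (a - y) (y - b)}"
  then have "0 \<le> inner (a - y) (y - b)" by simp
  moreover have "4 * inner (a - y) (y - b) = (norm (a - b))\<^sup>2 - (norm (2 *\<^sub>R y - a - b))\<^sup>2"
    by (simp add: power2_norm_eq_inner inner_diff_left inner_diff_right inner_commute algebra_simps)
  ultimately have "(norm (2 *\<^sub>R y - a - b))\<^sup>2 \<le> (norm (a - b))\<^sup>2" by linarith
  then have "norm (2 *\<^sub>R y - a - b) \<le> norm (a - b)" by (rule power2_le_imp_le) simp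
  moreover have "2 *\<^sub>R y - a - b = 2 *\<^sub>R (y - (1/2) *\<^sub>R (a + b))" by (simp add: algebra_simps)
  ultimately show "y \<in> cball ((1/2) *\<^sub>R (a + b)) (norm (a - b) / 2)"
    by (simp add: dist_norm norm_minus_commute)
qed

lemma max_monotone_op_memI:
  assumes "max_monotone_op E"
    and related: "\<And>x u. u \<in> E x \<Longrightarrow> 0 \<le> inner (v - u) (y - x)"
  shows "v \<in> E y"
proof -
  define B where "B x = (if x = y then insert v (E x) else E x)" for x
  have "monotone_op B"
    unfolding monotone_op_def
  proof (intro allI impI)
    fix x1 x2 u1 u2 assume "u1 \<in> B x1" "u2 \<in> B x2"
    then consider "x1 = y" "u1 = v" "x2 = y" "u2 = v" | "x1 = y" "u1 = v" "u2 \<in> E x2"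
      | "u1 \<in> E x1" "x2 = y" "u2 = v" | "u1 \<in> E x1" "u2 \<in> E x2"
      unfolding B_def by (auto split: if_splits)
    then show "0 \<le> inner (u1 - u2) (x1 - x2)"
    proof cases
      case 3
      then show ?thesis using related[of u1 x1] by (simp add: inner_diff_left inner_diff_right)
    next
      case 4
      then show ?thesis using \<open>max_monotone_op E\<close> by (simp add: max_monotone_op_def monotone_op_def)
    qed (simp_all add: related)
  qed
  moreover have "E x \<subseteq> B x" for x unfolding B_def by auto
  ultimately have "B = E" using \<open>max_monotone_op E\<close> unfolding max_monotone_op_def by blast
  moreover have "v \<in> B y" by (simp add: B_def)
  ultimately show ?thesis by simp
qed

lemma monotone_extension:
  fixes P :: "('a::euclidean_space \<times> 'a) set" and x0 :: 'a
  assumes mono: "\<And>p q. p \<in> P \<Longrightarrow> q \<in> P \<Longrightarrow> 0 \<le> inner (snd p - snd q) (fst p - fst q)"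
  obtains y where "\<And>p. p \<in> P \<Longrightarrow> 0 \<le> inner (x0 - y - snd p) (y - fst p)"
proof (cases "P = {}")
  case False
  then obtain p0 where "p0 \<in> P" by blast
  define K where "K p = {y. 0 \<le> inner (x0 - y - snd p) (y - fst p)}" for p :: "'a \<times> 'a"
  have K_closed: "closed (K p)" for p
    unfolding K_def by (intro closed_Collect_le continuous_intros)
  have "K p0 \<subseteq> cball ((1/2) *\<^sub>R ((x0 - snd p0) + fst p0)) (norm ((x0 - snd p0) - fst p0) / 2)"
    using inner_nonneg_subset_cball[of "x0 - snd p0" "fst p0"] unfolding K_def
    by (simp add: algebra_simps)
  then have "compact (K p0)"
    using K_closed by (metis bounded_cball bounded_subset compact_eq_bounded_closed)
  then have "K p0 \<inter> (\<Inter>p\<in>P. K p) \<noteq> {}"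
  proof (rule compact_imp_fip_image)
    fix I assume "finite I" "I \<subseteq> P"
    then obtain y where "\<And>p. p \<in> insert p0 I \<Longrightarrow> 0 \<le> inner (x0 - y - snd p) (y - fst p)"
      using monotone_finite_extension[of "insert p0 I"] mono \<open>p0 \<in> P\<close> by blast
    then show "K p0 \<inter> (\<Inter>p\<in>I. K p) \<noteq> {}" unfolding K_def by blast
  qed (rule K_closed)
  then show ?thesis using that unfolding K_def by blast
qed (use that in blast)

theorem max_monotone_op_resolvent_exists:
  fixes E :: "'a::euclidean_space \<Rightarrow> 'a set"
  assumes "max_monotone_op E" and "0 < \<alpha>"
  obtains y where "(1/\<alpha>) *\<^sub>R (x0 - y) \<in> E y"
proof -
  define P where "P = {(x, \<alpha> *\<^sub>R u) | x u. u \<in> E x}"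
  have "0 \<le> inner (snd p - snd q) (fst p - fst q)" if pq: "p \<in> P" "q \<in> P" for p q
  proof -
    obtain x u x' u' where "p = (x, \<alpha> *\<^sub>R u)" "u \<in> E x" "q = (x', \<alpha> *\<^sub>R u')" "u' \<in> E x'"
      using pq unfolding P_def by blast
    then show ?thesis
      using \<open>max_monotone_op E\<close> \<open>0 < \<alpha>\<close>
      by (simp add: max_monotone_op_def monotone_op_def flip: scaleR_diff_right)
  qed
  then obtain y where y: "\<And>p. p \<in> P \<Longrightarrow> 0 \<le> inner (x0 - y - snd p) (y - fst p)"
    using monotone_extension[of P x0] by blast
  have "(1/\<alpha>) *\<^sub>R (x0 - y) \<in> E y"
  proof (rule max_monotone_op_memI[OF \<open>max_monotone_op E\<close>])
    fix x u assume "u \<in> E x"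
    then have "0 \<le> inner (x0 - y - \<alpha> *\<^sub>R u) (y - x)"
      using y[of "(x, \<alpha> *\<^sub>R u)"] unfolding P_def by auto
    moreover have "(1/\<alpha>) *\<^sub>R (x0 - y) - u = (1/\<alpha>) *\<^sub>R (x0 - y - \<alpha> *\<^sub>R u)"
      using \<open>0 < \<alpha>\<close> by (simp add: scaleR_diff_right)
    ultimately show "0 \<le> inner ((1/\<alpha>) *\<^sub>R (x0 - y) - u) (y - x)"
      using \<open>0 < \<alpha>\<close> by simp
  qed
  then show ?thesis by (rule that)
qed

section \<open>Co-coercive operators and resolvents\<close>

lemma cocoercive_imp_lipschitz:
  assumes "cocoercive c f" and "0 < c"
  shows "(1/c)-lipschitz_on UNIV f"
proof (rule lipschitz_onI)
  fix x y
  have "c * (norm (f x - f y))\<^sup>2 \<le> inner (f x - f y) (x - y)"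
    using assms(1) unfolding cocoercive_def by blast
  also have "\<dots> \<le> norm (f x - f y) * norm (x - y)" by (rule norm_cauchy_schwarz)
  finally have "c * norm (f x - f y) \<le> norm (x - y)"
    by (cases "f x = f y") (simp_all add: power2_eq_square)
  then show "dist (f x) (f y) \<le> 1 / c * dist x y"
    using \<open>0 < c\<close> by (simp add: dist_norm field_simps)
qed (use \<open>0 < c\<close> in simp)

lemma cocoercive_scaleR:
  assumes "cocoercive c f" and "0 < t"
  shows "cocoercive (c / t) (\<lambda>x. t *\<^sub>R f x)"
  unfolding cocoercive_def
proof (intro allI)
  fix x y
  have "c / t * (norm (t *\<^sub>R f x - t *\<^sub>R f y))\<^sup>2 = t * (c * (norm (f x - f y))\<^sup>2)"
    using \<open>0 < t\<close> by (simp add: power2_eq_square flip: scaleR_diff_right)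
  also have "\<dots> \<le> t * inner (f x - f y) (x - y)"
    using assms unfolding cocoercive_def by (simp add: mult_left_mono)
  finally show "c / t * (norm (t *\<^sub>R f x - t *\<^sub>R f y))\<^sup>2 \<le> inner (t *\<^sub>R f x - t *\<^sub>R f y) (x - y)"
    by (simp flip: scaleR_diff_right)
qed

lemma norm_sum_squared_le:
  fixes d :: "nat \<Rightarrow> 'a::real_normed_vector"
  shows "(norm (\<Sum>i<N. d i))\<^sup>2 \<le> real N * (\<Sum>i<N. (norm (d i))\<^sup>2)"
proof -
  have "(norm (\<Sum>i<N. d i))\<^sup>2 \<le> (\<Sum>i<N. 1 * norm (d i))\<^sup>2"
    by (simp add: norm_sum power_mono)
  also have "\<dots> \<le> (\<Sum>i<N. 1\<^sup>2) * (\<Sum>i<N. (norm (d i))\<^sup>2)"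
    by (rule Cauchy_Schwarz_ineq_sum)
  finally show ?thesis by simp
qed

lemma cocoercive_average:
  fixes f :: "nat \<Rightarrow> 'a::real_inner \<Rightarrow> 'a"
  assumes "\<And>i. i < N \<Longrightarrow> cocoercive c (f i)" and "0 \<le> c"
  shows "cocoercive c (\<lambda>x. (1 / real N) *\<^sub>R (\<Sum>i<N. f i x))"
  unfolding cocoercive_def
proof (intro allI)
  fix x y :: 'a
  define d where "d i = f i x - f i y" for i
  have diff: "(1 / real N) *\<^sub>R (\<Sum>i<N. f i x) - (1 / real N) *\<^sub>R (\<Sum>i<N. f i y)
      = (1 / real N) *\<^sub>R (\<Sum>i<N. d i)"
    by (simp add: d_def sum_subtractf scaleR_diff_right)
  have "c * (norm ((1 / real N) *\<^sub>R (\<Sum>i<N. d i)))\<^sup>2 = c * (1 / real N)\<^sup>2 * (norm (\<Sum>i<N. d i))\<^sup>2"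
    by (simp add: power_mult_distrib power_divide)
  also have "\<dots> \<le> c * (1 / real N)\<^sup>2 * (real N * (\<Sum>i<N. (norm (d i))\<^sup>2))"
    using \<open>0 \<le> c\<close> by (intro mult_left_mono norm_sum_squared_le) auto
  also have "\<dots> = (1 / real N) * (\<Sum>i<N. c * (norm (d i))\<^sup>2)"
    by (simp add: sum_distrib_left power2_eq_square)
  also have "\<dots> \<le> (1 / real N) * (\<Sum>i<N. inner (d i) (x - y))"
    using assms(1) by (intro mult_left_mono sum_mono) (auto simp: cocoercive_def d_def)
  also have "\<dots> = inner ((1 / real N) *\<^sub>R (\<Sum>i<N. d i)) (x - y)"
    by (simp add: inner_sum_left)
  finally show "c * (norm ((1 / real N) *\<^sub>R (\<Sum>i<N. f i x) - (1 / real N) *\<^sub>R (\<Sum>i<N. f i y)))\<^sup>2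
      \<le> inner ((1 / real N) *\<^sub>R (\<Sum>i<N. f i x) - (1 / real N) *\<^sub>R (\<Sum>i<N. f i y)) (x - y)"
    unfolding diff .
qed

lemma resolvent_mem:
  fixes E :: "'a::euclidean_space \<Rightarrow> 'a set"
  assumes "max_monotone_op E" and "0 < \<alpha>"
  shows "(1/\<alpha>) *\<^sub>R (x - resolvent \<alpha> E x) \<in> E (resolvent \<alpha> E x)"
proof -
  obtain y where y: "(1/\<alpha>) *\<^sub>R (x - y) \<in> E y"
    using max_monotone_op_resolvent_exists[OF assms] .
  have "y' = y" if "(1/\<alpha>) *\<^sub>R (x - y') \<in> E y'" for y'
  proof -
    have "0 \<le> inner ((1/\<alpha>) *\<^sub>R (x - y') - (1/\<alpha>) *\<^sub>R (x - y)) (y' - y)"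
      using that y \<open>max_monotone_op E\<close> by (simp add: max_monotone_op_def monotone_op_def)
    also have "\<dots> = - (1/\<alpha>) * (norm (y' - y))\<^sup>2"
      by (simp add: power2_norm_eq_inner inner_diff_left inner_diff_right algebra_simps)
    finally show "y' = y" using \<open>0 < \<alpha>\<close> by (simp add: divide_le_0_iff)
  qed
  with y have "\<exists>!y. (1/\<alpha>) *\<^sub>R (x - y) \<in> E y" by blast
  then show ?thesis unfolding resolvent_def by (rule theI')
qed

lemma resolvent_cocoercive:
  fixes E :: "'a::euclidean_space \<Rightarrow> 'a set"
  assumes "max_monotone_op E" and "0 < \<alpha>"
  shows "cocoercive 1 (resolvent \<alpha> E)"
  unfolding cocoercive_def
proof (intro allI)
  fix x y
  define p q where "p = resolvent \<alpha> E x" and "q = resolvent \<alpha> E y"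
  have "0 \<le> inner ((1/\<alpha>) *\<^sub>R (x - p) - (1/\<alpha>) *\<^sub>R (y - q)) (p - q)"
    using resolvent_mem[OF assms] \<open>max_monotone_op E\<close>
    unfolding p_def q_def max_monotone_op_def monotone_op_def by blast
  also have "\<dots> = (1/\<alpha>) * (inner (p - q) (x - y) - (norm (p - q))\<^sup>2)"
    by (simp add: power2_norm_eq_inner inner_diff_left inner_diff_right inner_commute algebra_simps)
  finally show "1 * (norm (p - q))\<^sup>2 \<le> inner (p - q) (x - y)"
    using \<open>0 < \<alpha>\<close> by (simp add: zero_le_divide_iff)
qed

lemma resolvent_nonexpansive:
  fixes E :: "'a::euclidean_space \<Rightarrow> 'a set"
  assumes "max_monotone_op E" and "0 < \<alpha>"
  shows "norm (resolvent \<alpha> E x - resolvent \<alpha> E y) \<le> norm (x - y)"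
  using lipschitz_onD[OF cocoercive_imp_lipschitz[OF resolvent_cocoercive[OF assms]]]
  by (simp add: dist_norm)

lemma forward_backward_residual_cocoercive:
  fixes E :: "'a::euclidean_space \<Rightarrow> 'a set" and F :: "'a \<Rightarrow> 'a"
  assumes "max_monotone_op E" and "0 < \<alpha>" and "0 < L0" and "cocoercive (1 / L0) F"
  shows "cocoercive (\<alpha> * (4 - \<alpha> * L0) / 4) (\<lambda>x. (1/\<alpha>) *\<^sub>R (x - resolvent \<alpha> E (x - \<alpha> *\<^sub>R F x)))"
    (is "cocoercive _ ?G")
  unfolding cocoercive_def
proof (intro allI)
  fix x y
  define dx df dg where "dx = x - y" and "df = F x - F y" and "dg = ?G x - ?G y"
  have "(norm (dx - \<alpha> *\<^sub>R dg))\<^sup>2 \<le> inner (dx - \<alpha> *\<^sub>R dg) (dx - \<alpha> *\<^sub>R df)"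
  proof -
    have "resolvent \<alpha> E (x - \<alpha> *\<^sub>R F x) - resolvent \<alpha> E (y - \<alpha> *\<^sub>R F y) = dx - \<alpha> *\<^sub>R dg"
      using \<open>0 < \<alpha>\<close> by (simp add: dx_def dg_def algebra_simps)
    moreover have "(x - \<alpha> *\<^sub>R F x) - (y - \<alpha> *\<^sub>R F y) = dx - \<alpha> *\<^sub>R df"
      by (simp add: dx_def df_def algebra_simps)
    ultimately show ?thesis
      using resolvent_cocoercive[OF assms(1,2)] unfolding cocoercive_def by (metis mult_1)
  qed
  then have fb: "\<alpha> * inner dg dx \<ge> \<alpha> * inner dx df - \<alpha>\<^sup>2 * inner dg df + \<alpha>\<^sup>2 * inner dg dg"
    unfolding power2_norm_eq_inner by (simp add: inner_diff_left inner_diff_right inner_commute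
        power2_eq_square algebra_simps)
  have "(1/L0) * inner df df \<le> inner dx df"
    using \<open>cocoercive (1 / L0) F\<close> unfolding cocoercive_def df_def dx_def
    by (metis inner_commute power2_norm_eq_inner)
  moreover have "(1/L0) * inner df df \<ge> \<alpha> * inner dg df - \<alpha>\<^sup>2 * L0 / 4 * inner dg dg"
  proof -
    have "\<alpha> * L0 * inner dg df - (\<alpha> * L0 / 2)\<^sup>2 * inner dg dg \<le> inner df df"
      using inner_ge_zero[of "df - (\<alpha> * L0 / 2) *\<^sub>R dg"]
      by (simp add: inner_diff_left inner_diff_right inner_commute power2_eq_square algebra_simps)
    then have "(1/L0) * (\<alpha> * L0 * inner dg df - (\<alpha> * L0 / 2)\<^sup>2 * inner dg dg) \<le> (1/L0) * inner df df"
      using \<open>0 < L0\<close> by (intro mult_left_mono) auto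
    moreover have "(1/L0) * (\<alpha> * L0 * inner dg df - (\<alpha> * L0 / 2)\<^sup>2 * inner dg dg)
        = \<alpha> * inner dg df - \<alpha>\<^sup>2 * L0 / 4 * inner dg dg"
      using \<open>0 < L0\<close> by (simp add: power2_eq_square field_simps)
    ultimately show ?thesis by linarith
  qed
  ultimately have "inner dx df \<ge> \<alpha> * inner dg df - \<alpha>\<^sup>2 * L0 / 4 * inner dg dg"
    by linarith
  then have "\<alpha> * inner dx df \<ge> \<alpha> * (\<alpha> * inner dg df - \<alpha>\<^sup>2 * L0 / 4 * inner dg dg)"
    using \<open>0 < \<alpha>\<close> by (intro mult_left_mono) auto
  with fb have "\<alpha> * inner dg dx \<ge> \<alpha> * ((\<alpha> * (4 - \<alpha> * L0) / 4) * inner dg dg)"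
    by (simp add: power2_eq_square algebra_simps)
  then have "inner dg dx \<ge> (\<alpha> * (4 - \<alpha> * L0) / 4) * inner dg dg"
    using \<open>0 < \<alpha>\<close> by simp
  then show "\<alpha> * (4 - \<alpha> * L0) / 4 * (norm dg)\<^sup>2 \<le> inner dg (x - y)"
    by (simp add: dx_def power2_norm_eq_inner)
qed

lemma forward_backward_inexact_residual:
  fixes E :: "'a::euclidean_space \<Rightarrow> 'a set"
  assumes "max_monotone_op E" and "0 < \<alpha>"
    and "norm (resolvent \<alpha> E (x - \<alpha> *\<^sub>R u') - x') \<le> \<epsilon>"
  shows "(norm ((1/\<alpha>) *\<^sub>R (x - x') - (1/\<alpha>) *\<^sub>R (x - resolvent \<alpha> E (x - \<alpha> *\<^sub>R u))))\<^sup>2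
    \<le> 2 * (norm (u - u'))\<^sup>2 + 2 * (\<epsilon> / \<alpha>)\<^sup>2"
proof -
  let ?J = "resolvent \<alpha> E"
  have "(x - \<alpha> *\<^sub>R u) - (x - \<alpha> *\<^sub>R u') = \<alpha> *\<^sub>R (u' - u)"
    by (simp add: algebra_simps)
  then have "norm (?J (x - \<alpha> *\<^sub>R u) - ?J (x - \<alpha> *\<^sub>R u')) \<le> \<alpha> * norm (u - u')"
    using resolvent_nonexpansive[OF assms(1,2), of "x - \<alpha> *\<^sub>R u" "x - \<alpha> *\<^sub>R u'"] \<open>0 < \<alpha>\<close>
    by (simp add: norm_minus_commute)
  then have J_bound: "norm (?J (x - \<alpha> *\<^sub>R u) - x') \<le> \<alpha> * norm (u - u') + \<epsilon>"
    using assms(3) by (rule norm_diff_triangle_le)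
  have "(1/\<alpha>) *\<^sub>R (x - x') - (1/\<alpha>) *\<^sub>R (x - ?J (x - \<alpha> *\<^sub>R u))
      = (1/\<alpha>) *\<^sub>R (?J (x - \<alpha> *\<^sub>R u) - x')"
    by (simp add: algebra_simps)
  then have "norm ((1/\<alpha>) *\<^sub>R (x - x') - (1/\<alpha>) *\<^sub>R (x - ?J (x - \<alpha> *\<^sub>R u)))
      = norm (?J (x - \<alpha> *\<^sub>R u) - x') / \<alpha>"
    using \<open>0 < \<alpha>\<close> by simp
  also have "\<dots> \<le> (\<alpha> * norm (u - u') + \<epsilon>) / \<alpha>"
    using \<open>0 < \<alpha>\<close> J_bound by (intro divide_right_mono) auto
  also have "\<dots> = norm (u - u') + \<epsilon> / \<alpha>"
    using \<open>0 < \<alpha>\<close> by (simp add: add_divide_distrib)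
  finally have "(norm ((1/\<alpha>) *\<^sub>R (x - x') - (1/\<alpha>) *\<^sub>R (x - ?J (x - \<alpha> *\<^sub>R u))))\<^sup>2
      \<le> (norm (u - u') + \<epsilon> / \<alpha>)\<^sup>2"
    by (intro power_mono) auto
  also have "\<dots> \<le> 2 * (norm (u - u'))\<^sup>2 + 2 * (\<epsilon> / \<alpha>)\<^sup>2"
    using power2_sum[of "norm (u - u')" "\<epsilon> / \<alpha>"] power2_diff[of "norm (u - u')" "\<epsilon> / \<alpha>"]
      zero_le_power2[of "norm (u - u') - \<epsilon> / \<alpha>"]
    by linarith
  finally show ?thesis .
qed

section \<open>Halpern iteration with errors\<close>

lemma mult_le_weighted_squares:
  fixes x y c :: real
  assumes "0 < c"
  shows "x * y \<le> c / 2 * x\<^sup>2 + y\<^sup>2 / (2 * c)"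
proof -
  have "0 \<le> (c * x - y)\<^sup>2 / (2 * c)" using assms by simp
  also have "(c * x - y)\<^sup>2 / (2 * c) = c / 2 * x\<^sup>2 + y\<^sup>2 / (2 * c) - x * y"
    using assms by (simp add: power2_eq_square field_simps)
  finally show ?thesis by simp
qed

lemma sum_inverse_squares_shifted_le: "(\<Sum>i<k. 1 / (real i + 2)\<^sup>2) \<le> 1 - 1 / (real k + 1)"
proof (induction k)
  case (Suc k)
  have "1 / (real k + 2)\<^sup>2 \<le> 1 / ((real k + 1) * (real k + 2))"
    by (intro divide_left_mono) (auto simp: power2_eq_square)
  also have "\<dots> = 1 / (real k + 1) - 1 / (real k + 2)"
    by (simp add: field_simps)
  finally show ?case using Suc.IH by (simp add: add.commute)
qed simp

lemma sum_inverse_squares_le: "(\<Sum>i<k. 1 / (real i + 1)\<^sup>2) \<le> 2"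
proof (cases k)
  case (Suc m)
  have "(\<Sum>i<Suc m. 1 / (real i + 1)\<^sup>2) = 1 + (\<Sum>i<m. 1 / (real i + 2)\<^sup>2)"
    by (subst sum.lessThan_Suc_shift) (simp add: add.commute add.left_commute)
  also have "\<dots> \<le> 2"
  proof -
    have "0 \<le> 1 / (real m + 1)" by simp
    then show ?thesis using sum_inverse_squares_shifted_le[of m] by linarith
  qed
  finally show ?thesis using Suc by simp
qed simp

lemma sum_squared_le_weighted:
  fixes r :: "nat \<Rightarrow> real"
  shows "(\<Sum>i<k. r i)\<^sup>2 \<le> 2 * (\<Sum>i<k. (real i + 1)\<^sup>2 * (r i)\<^sup>2)"
proof -
  have "(\<Sum>i<k. r i)\<^sup>2 = (\<Sum>i<k. (1 / (real i + 1)) * ((real i + 1) * r i))\<^sup>2"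
    by simp
  also have "\<dots> \<le> (\<Sum>i<k. (1 / (real i + 1))\<^sup>2) * (\<Sum>i<k. ((real i + 1) * r i)\<^sup>2)"
    by (rule Cauchy_Schwarz_ineq_sum)
  also have "\<dots> \<le> 2 * (\<Sum>i<k. ((real i + 1) * r i)\<^sup>2)"
    using sum_inverse_squares_le[of k]
    by (intro mult_right_mono) (simp_all add: power_one_over sum_nonneg)
  finally show ?thesis by (simp add: power_mult_distrib)
qed

lemma residual_cross_term_le:
  fixes G e B :: real
  assumes "(real i + 1) * (real i + 2) * G\<^sup>2 \<le> B"
  shows "(real i + 1) * (G * e) \<le> B / 8 * (1 / (real i + 2)\<^sup>2) + 2 * ((real i + 1) * (real i + 2) * e\<^sup>2)"
proof -
  define c where "c = (real i + 1) / (4 * (real i + 2))"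
  have "0 < c" and "real i + 2 \<noteq> 0" by (simp_all add: c_def)
  have "(real i + 1) * (G * e) = G * ((real i + 1) * e)" by simp
  also have "\<dots> \<le> c / 2 * G\<^sup>2 + ((real i + 1) * e)\<^sup>2 / (2 * c)"
    using \<open>0 < c\<close> by (rule mult_le_weighted_squares)
  also have "c / 2 * G\<^sup>2 = (real i + 1) * (real i + 2) * G\<^sup>2 / 8 * (1 / (real i + 2)\<^sup>2)"
    using \<open>real i + 2 \<noteq> 0\<close> by (simp add: c_def power2_eq_square)
  also have "\<dots> \<le> B / 8 * (1 / (real i + 2)\<^sup>2)"
    using assms by (intro mult_right_mono divide_right_mono) auto
  also have "((real i + 1) * e)\<^sup>2 / (2 * c) = 2 * ((real i + 1) * (real i + 2) * e\<^sup>2)"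
    by (simp add: c_def power2_eq_square field_simps)
  finally show ?thesis by simp
qed

lemma halpern_weight_le:
  fixes c :: real
  shows "(real k + 1) * (real k + 2) * (c / (real k + 2))\<^sup>2 \<le> c\<^sup>2"
proof -
  have "real k + 2 \<noteq> 0" by simp
  then have "(real k + 1) * (real k + 2) * (c / (real k + 2))\<^sup>2 = (real k + 1) / (real k + 2) * c\<^sup>2"
    by (simp add: power2_eq_square)
  also have "\<dots> \<le> c\<^sup>2" by (intro mult_left_le_one_le) auto
  finally show ?thesis .
qed

lemma norm_add3_squared_le:
  fixes u v w :: "'a::real_normed_vector"
  shows "(norm (u + v + w))\<^sup>2 \<le> 3 * ((norm u)\<^sup>2 + (norm v)\<^sup>2 + (norm w)\<^sup>2)"
proof -
  have "(norm (u + v + w))\<^sup>2 \<le> (norm u + norm v + norm w)\<^sup>2"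
    by (intro power_mono) (auto intro: norm_triangle_le add_mono)
  also have "\<dots> \<le> 3 * ((norm u)\<^sup>2 + (norm v)\<^sup>2 + (norm w)\<^sup>2)"
    using sum_squares_ge_zero[of "norm u - norm v" "norm u - norm w"]
      zero_le_power2[of "norm v - norm w"]
    by (simp add: power2_eq_square algebra_simps)
  finally show ?thesis .
qed

lemma halpern_potential_decrease:
  fixes a b d w :: "'a::real_inner" and n :: real
  assumes "0 < n" and firm: "(n + 1) * (norm (a - b))\<^sup>2 \<le> - inner (a - b) (w + n *\<^sub>R (b + d))"
  shows "n * inner a (w - b - d) + n * (n + 1) / 2 * (norm a)\<^sup>2
    \<le> n * inner b w + (n - 1) * n / 2 * (norm b)\<^sup>2 + n * (n + 1) / 2 * (norm d)\<^sup>2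
       + n * (norm b * norm d)"
proof -
  have "(n * inner b w + (n - 1) * n / 2 * (norm b)\<^sup>2 + n * (n + 1) / 2 * (norm d)\<^sup>2
          + n * (norm b * norm d)) - (n * inner a (w - b - d) + n * (n + 1) / 2 * (norm a)\<^sup>2)
      = n * (- inner (a - b) (w + n *\<^sub>R (b + d)) - (n + 1) * (norm (a - b))\<^sup>2)
        + n * (n + 1) / 2 * (norm (a - b + d))\<^sup>2 + n * (inner b d + norm b * norm d)"
    unfolding power2_norm_eq_inner
    by (simp add: inner_diff_left inner_diff_right inner_add_left inner_add_right inner_commute
        algebra_simps) (simp add: field_simps)
  moreover have "0 \<le> n * (- inner (a - b) (w + n *\<^sub>R (b + d)) - (n + 1) * (norm (a - b))\<^sup>2)"
    using \<open>0 < n\<close> firm by simp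
  moreover have "0 \<le> n * (n + 1) / 2 * (norm (a - b + d))\<^sup>2"
    using \<open>0 < n\<close> by simp
  moreover have "0 \<le> n * (inner b d + norm b * norm d)"
    using \<open>0 < n\<close> norm_cauchy_schwarz[of "- b" d] by simp
  ultimately show ?thesis by linarith
qed

lemma cocoercive_complement_nonexpansive:
  assumes "cocoercive 1 g"
  shows "norm ((x - g x) - (y - g y)) \<le> norm (x - y)"
proof -
  have "(norm ((x - g x) - (y - g y)))\<^sup>2
      = (norm (x - y))\<^sup>2 - 2 * inner (g x - g y) (x - y) + (norm (g x - g y))\<^sup>2"
    unfolding power2_norm_eq_inner
    by (simp add: inner_diff_left inner_diff_right inner_commute algebra_simps)
  also have "\<dots> \<le> (norm (x - y))\<^sup>2"
    using assms zero_le_power2[of "norm (g x - g y)"] unfolding cocoercive_def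
    by (smt (verit) mult_1)
  finally show ?thesis by (rule power2_le_imp_le) simp
qed

locale inexact_halpern =
  fixes g :: "'a::real_inner \<Rightarrow> 'a" and z \<delta> :: "nat \<Rightarrow> 'a" and z0 zs :: 'a
  assumes firm: "cocoercive 1 g"
    and root: "g zs = 0"
    and init: "z 0 = z0"
    and step: "\<And>k. z (Suc k) = (1 / real (k + 2)) *\<^sub>R z0 + (1 - 1 / real (k + 2)) *\<^sub>R (z k - g (z k) - \<delta> k)"
begin

definition potential :: "nat \<Rightarrow> real" where
  "potential k = (real k + 1) * inner (g (z k)) (z k - z0) + real k * (real k + 1) / 2 * (norm (g (z k)))\<^sup>2"

definition error_sum :: "nat \<Rightarrow> real" where
  "error_sum k = (\<Sum>i<k. (real i + 1)\<^sup>2 * (norm (\<delta> i))\<^sup>2)"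

lemma firmly_nonexpansive: "(norm (g x - g y))\<^sup>2 \<le> inner (g x - g y) (x - y)"
  using firm by (simp add: cocoercive_def)

lemma step_diff:
  "z (Suc k) - z k = - (1 / (real k + 2)) *\<^sub>R (z k - z0) - ((real k + 1) / (real k + 2)) *\<^sub>R (g (z k) + \<delta> k)"
proof -
  define \<beta> where "\<beta> = 1 / (real k + 2)"
  have "z (Suc k) - z k = - \<beta> *\<^sub>R (z k - z0) - (1 - \<beta>) *\<^sub>R (g (z k) + \<delta> k)"
    unfolding step \<beta>_def by (simp add: algebra_simps add.commute[of 2])
  moreover have "1 - \<beta> = (real k + 1) / (real k + 2)" by (simp add: \<beta>_def field_simps)
  ultimately show ?thesis by (simp add: \<beta>_def)
qed

lemma step_from_anchor:
  "z (Suc k) - z0 = ((real k + 1) / (real k + 2)) *\<^sub>R (z k - z0 - g (z k) - \<delta> k)"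
proof -
  define \<beta> where "\<beta> = 1 / (real k + 2)"
  have "z (Suc k) - z0 = (1 - \<beta>) *\<^sub>R (z k - z0 - g (z k) - \<delta> k)"
    unfolding step \<beta>_def by (simp add: algebra_simps add.commute[of 2])
  moreover have "1 - \<beta> = (real k + 1) / (real k + 2)" by (simp add: \<beta>_def field_simps)
  ultimately show ?thesis by simp
qed

lemma potential_Suc_le:
  "potential (Suc k) \<le> potential k + (real k + 1) * (real k + 2) / 2 * (norm (\<delta> k))\<^sup>2
                                     + (real k + 1) * (norm (g (z k)) * norm (\<delta> k))"
proof -
  define n where "n = real k + 1"
  have "0 < n" by (simp add: n_def)
  have "(norm (g (z (Suc k)) - g (z k)))\<^sup>2 \<le> inner (g (z (Suc k)) - g (z k)) (z (Suc k) - z k)"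
    by (rule firmly_nonexpansive)
  also have "z (Suc k) - z k = - (1 / (n + 1)) *\<^sub>R ((z k - z0) + n *\<^sub>R (g (z k) + \<delta> k))"
    unfolding step_diff n_def by (simp add: algebra_simps add_divide_distrib)
  finally have "(norm (g (z (Suc k)) - g (z k)))\<^sup>2
      \<le> - inner (g (z (Suc k)) - g (z k)) ((z k - z0) + n *\<^sub>R (g (z k) + \<delta> k)) / (n + 1)"
    by simp
  then have "(n + 1) * (norm (g (z (Suc k)) - g (z k)))\<^sup>2
      \<le> (n + 1) * (- inner (g (z (Suc k)) - g (z k)) ((z k - z0) + n *\<^sub>R (g (z k) + \<delta> k)) / (n + 1))"
    using \<open>0 < n\<close> by (intro mult_left_mono) auto
  then have "(n + 1) * (norm (g (z (Suc k)) - g (z k)))\<^sup>2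
      \<le> - inner (g (z (Suc k)) - g (z k)) ((z k - z0) + n *\<^sub>R (g (z k) + \<delta> k))"
    using \<open>0 < n\<close> by (simp add: add_pos_pos)
  note halpern_potential_decrease[OF \<open>0 < n\<close> this]
  moreover have "potential (Suc k) = n * inner (g (z (Suc k))) (z k - z0 - g (z k) - \<delta> k)
                                    + n * (n + 1) / 2 * (norm (g (z (Suc k))))\<^sup>2"
    unfolding potential_def step_from_anchor inner_scaleR_right n_def by (simp add: field_simps)
  moreover have "potential k = n * inner (g (z k)) (z k - z0) + (n - 1) * n / 2 * (norm (g (z k)))\<^sup>2"
    unfolding potential_def n_def by simp
  moreover have n2: "real k + 2 = n + 1" by (simp add: n_def)
  ultimately show ?thesis unfolding n2 n_def[symmetric] by simp
qed

lemma potential_le_sum: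
  "potential k \<le> (\<Sum>i<k. (real i + 1) * (real i + 2) / 2 * (norm (\<delta> i))\<^sup>2
                         + (real i + 1) * (norm (g (z i)) * norm (\<delta> i)))"
proof (induction k)
  case 0
  then show ?case by (simp add: potential_def init)
next
  case (Suc k)
  then show ?case using potential_Suc_le[of k] by simp
qed

lemma potential_ge:
  "(real k + 1) * (real k + 2) / 2 * (norm (g (z k)))\<^sup>2 - (real k + 1) * (norm (z0 - zs) * norm (g (z k)))
    \<le> potential k"
proof -
  have "(norm (g (z k)))\<^sup>2 \<le> inner (g (z k)) (z k - zs)"
    using firmly_nonexpansive[of "z k" zs] by (simp add: root)
  moreover have "- (norm (z0 - zs) * norm (g (z k))) \<le> inner (g (z k)) (zs - z0)"
    using norm_cauchy_schwarz[of "g (z k)" "z0 - zs"]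
    by (simp add: inner_diff_right norm_minus_commute mult.commute)
  ultimately have "(norm (g (z k)))\<^sup>2 - norm (z0 - zs) * norm (g (z k)) \<le> inner (g (z k)) (z k - z0)"
    by (simp add: inner_diff_right)
  then have "(real k + 1) * ((norm (g (z k)))\<^sup>2 - norm (z0 - zs) * norm (g (z k)))
      \<le> (real k + 1) * inner (g (z k)) (z k - z0)"
    by (intro mult_left_mono) auto
  then show ?thesis
    unfolding potential_def by (simp add: algebra_simps add_divide_distrib)
qed

lemma potential_error_terms_le:
  assumes "0 \<le> B" and residual: "\<And>i. i < k \<Longrightarrow> (real i + 1) * (real i + 2) * (norm (g (z i)))\<^sup>2 \<le> B"
  shows "(\<Sum>i<k. (real i + 1) * (real i + 2) / 2 * (norm (\<delta> i))\<^sup>2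
                 + (real i + 1) * (norm (g (z i)) * norm (\<delta> i))) \<le> 5 * error_sum k + B / 8"
proof -
  have "(real i + 1) * (real i + 2) / 2 * (norm (\<delta> i))\<^sup>2 + (real i + 1) * (norm (g (z i)) * norm (\<delta> i))
      \<le> 5 * ((real i + 1)\<^sup>2 * (norm (\<delta> i))\<^sup>2) + B / 8 * (1 / (real i + 2)\<^sup>2)" if "i < k" for i
  proof -
    have "(real i + 1) * (real i + 2) \<le> 2 * (real i + 1)\<^sup>2"
      by (simp add: power2_eq_square algebra_simps)
    then have "(real i + 1) * (real i + 2) * (norm (\<delta> i))\<^sup>2 \<le> 2 * (real i + 1)\<^sup>2 * (norm (\<delta> i))\<^sup>2"
      by (rule mult_right_mono) simp
    with residual_cross_term_le[OF residual[OF that], of "norm (\<delta> i)"] show ?thesis by simp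
  qed
  then have "(\<Sum>i<k. (real i + 1) * (real i + 2) / 2 * (norm (\<delta> i))\<^sup>2
                 + (real i + 1) * (norm (g (z i)) * norm (\<delta> i)))
      \<le> (\<Sum>i<k. 5 * ((real i + 1)\<^sup>2 * (norm (\<delta> i))\<^sup>2) + B / 8 * (1 / (real i + 2)\<^sup>2))"
    by (intro sum_mono) simp
  also have "\<dots> = 5 * error_sum k + B / 8 * (\<Sum>i<k. 1 / (real i + 2)\<^sup>2)"
    by (simp add: error_sum_def sum.distrib sum_distrib_left)
  also have "\<dots> \<le> 5 * error_sum k + B / 8"
  proof -
    have "0 \<le> 1 / (real k + 1)" by simp
    then have "(\<Sum>i<k. 1 / (real i + 2)\<^sup>2) \<le> 1"
      using sum_inverse_squares_shifted_le[of k] by linarith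
    then show ?thesis using \<open>0 \<le> B\<close> by (simp add: mult_left_le)
  qed
  finally show ?thesis .
qed

lemma error_sum_mono: "i \<le> k \<Longrightarrow> error_sum i \<le> error_sum k"
  unfolding error_sum_def by (intro sum_mono2) auto

theorem residual_bound:
  "(real k + 1) * (real k + 2) * (norm (g (z k)))\<^sup>2 \<le> 8 * (norm (z0 - zs))\<^sup>2 + 40 * error_sum k"
proof (induction k rule: less_induct)
  case (less k)
  define D where "D = norm (z0 - zs)"
  define Q where "Q = (real k + 1) * (real k + 2) * (norm (g (z k)))\<^sup>2"
  define B where "B = 8 * D\<^sup>2 + 40 * error_sum k"
  have "0 \<le> error_sum k" unfolding error_sum_def by (intro sum_nonneg) simp
  then have "0 \<le> B" by (simp add: B_def)
  have "(real i + 1) * (real i + 2) * (norm (g (z i)))\<^sup>2 \<le> B" if "i < k" for i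
    using less.IH[OF that] error_sum_mono[of i k] that unfolding B_def D_def by simp
  with \<open>0 \<le> B\<close> have "Q / 2 - (real k + 1) * (D * norm (g (z k))) \<le> 5 * error_sum k + B / 8"
    using potential_ge[of k] potential_le_sum[of k] potential_error_terms_le[of B k]
    unfolding Q_def D_def by simp
  moreover have "(real k + 1) * (D * norm (g (z k))) \<le> Q / 4 + D\<^sup>2"
  proof -
    have "(real k + 1) * (D * norm (g (z k))) = ((real k + 1) * norm (g (z k))) * D" by simp
    also have "\<dots> \<le> (1/2) / 2 * ((real k + 1) * norm (g (z k)))\<^sup>2 + D\<^sup>2 / (2 * (1/2))"
      by (rule mult_le_weighted_squares) simp
    also have "\<dots> = (real k + 1) * (real k + 1) * (norm (g (z k)))\<^sup>2 / 4 + D\<^sup>2"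
      by (simp add: power_mult_distrib power2_eq_square)
    also have "\<dots> \<le> Q / 4 + D\<^sup>2"
      unfolding Q_def by (intro add_right_mono divide_right_mono mult_right_mono) auto
    finally show ?thesis .
  qed
  moreover have "B / 8 = D\<^sup>2 + 5 * error_sum k" by (simp add: B_def)
  ultimately have "Q \<le> 8 * D\<^sup>2 + 40 * error_sum k" by linarith
  then show ?case by (simp add: Q_def D_def)
qed

lemma dist_root_le: "norm (z k - zs) \<le> norm (z0 - zs) + (\<Sum>i<k. norm (\<delta> i))"
proof (induction k)
  case 0
  show ?case by (simp add: init)
next
  case (Suc k)
  define \<beta> where "\<beta> = 1 / real (k + 2)"
  have "0 \<le> \<beta>" "\<beta> \<le> 1" by (auto simp: \<beta>_def)
  have "z (Suc k) - zs = \<beta> *\<^sub>R (z0 - zs) + (1 - \<beta>) *\<^sub>R ((z k - g (z k)) - (zs - g zs)) - (1 - \<beta>) *\<^sub>R \<delta> k"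
    unfolding step \<beta>_def[symmetric] root by (simp add: algebra_simps)
  then have "norm (z (Suc k) - zs)
      \<le> norm (\<beta> *\<^sub>R (z0 - zs)) + norm ((1 - \<beta>) *\<^sub>R ((z k - g (z k)) - (zs - g zs)))
         + norm ((1 - \<beta>) *\<^sub>R \<delta> k)"
    by (metis norm_triangle_ineq4 norm_triangle_ineq order_trans add_right_mono)
  also have "\<dots> = \<beta> * norm (z0 - zs) + (1 - \<beta>) * norm ((z k - g (z k)) - (zs - g zs))
                   + (1 - \<beta>) * norm (\<delta> k)"
    using \<open>0 \<le> \<beta>\<close> \<open>\<beta> \<le> 1\<close> by simp
  also have "\<dots> \<le> \<beta> * norm (z0 - zs) + (1 - \<beta>) * (norm (z0 - zs) + (\<Sum>i<k. norm (\<delta> i))) + (1 - \<beta>) * norm (\<delta> k)"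
    using cocoercive_complement_nonexpansive[OF firm, of "z k" zs] Suc.IH \<open>0 \<le> \<beta>\<close> \<open>\<beta> \<le> 1\<close>
    by (intro add_mono mult_left_mono) auto
  also have "\<dots> \<le> norm (z0 - zs) + ((\<Sum>i<k. norm (\<delta> i)) + norm (\<delta> k))"
    using \<open>0 \<le> \<beta>\<close> mult_left_le_one_le[of "(\<Sum>i<k. norm (\<delta> i)) + norm (\<delta> k)" "1 - \<beta>"]
    by (simp add: sum_nonneg algebra_simps)
  finally show ?case by simp
qed

lemma dist_anchor_squared_le: "(norm (z k - z0))\<^sup>2 \<le> 8 * (norm (z0 - zs))\<^sup>2 + 4 * error_sum k"
proof -
  define D where "D = norm (z0 - zs)"
  define S where "S = (\<Sum>i<k. norm (\<delta> i))"
  have "norm (z k - z0) \<le> 2 * D + S"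
    using dist_root_le[of k] norm_triangle_ineq[of "z k - zs" "zs - z0"]
    by (simp add: D_def S_def norm_minus_commute)
  then have "(norm (z k - z0))\<^sup>2 \<le> (2 * D + S)\<^sup>2" by (simp add: power_mono)
  also have "\<dots> \<le> 8 * D\<^sup>2 + 2 * S\<^sup>2"
    using zero_le_power2[of "2 * D - S"] by (simp add: power2_eq_square algebra_simps)
  also have "\<dots> \<le> 8 * D\<^sup>2 + 4 * error_sum k"
    using sum_squared_le_weighted[of "\<lambda>i. norm (\<delta> i)" k] by (simp add: S_def error_sum_def)
  finally show ?thesis by (simp add: D_def)
qed

theorem step_bound:
  "(real k + 1) * (real k + 2) * (norm (z (Suc k) - z k))\<^sup>2
    \<le> 48 * (norm (z0 - zs))\<^sup>2 + 132 * error_sum (Suc k)"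
proof -
  define q where "q = (real k + 1) * (real k + 2)"
  have weight: "q * (norm (- (a / (real k + 2)) *\<^sub>R v))\<^sup>2 \<le> (a * norm v)\<^sup>2" if "0 \<le> a" for a v
    using halpern_weight_le[of k "a * norm v"] that by (simp add: q_def power_mult_distrib power_divide)
  have "z (Suc k) - z k = - (1 / (real k + 2)) *\<^sub>R (z k - z0)
      + - ((real k + 1) / (real k + 2)) *\<^sub>R g (z k) + - ((real k + 1) / (real k + 2)) *\<^sub>R \<delta> k"
    unfolding step_diff by (simp add: algebra_simps)
  then have "q * (norm (z (Suc k) - z k))\<^sup>2
      \<le> q * (3 * ((norm (- (1 / (real k + 2)) *\<^sub>R (z k - z0)))\<^sup>2
                 + (norm (- ((real k + 1) / (real k + 2)) *\<^sub>R g (z k)))\<^sup>2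
                 + (norm (- ((real k + 1) / (real k + 2)) *\<^sub>R \<delta> k))\<^sup>2))"
    by (simp only:) (intro mult_left_mono norm_add3_squared_le, simp add: q_def)
  also have "\<dots> = 3 * (q * (norm (- (1 / (real k + 2)) *\<^sub>R (z k - z0)))\<^sup>2
                     + q * (norm (- ((real k + 1) / (real k + 2)) *\<^sub>R g (z k)))\<^sup>2
                     + q * (norm (- ((real k + 1) / (real k + 2)) *\<^sub>R \<delta> k))\<^sup>2)"
    by (simp only: distrib_left mult.left_commute)
  also have "\<dots> \<le> 3 * ((norm (z k - z0))\<^sup>2 + (real k + 1)\<^sup>2 * (norm (g (z k)))\<^sup>2
                     + (real k + 1)\<^sup>2 * (norm (\<delta> k))\<^sup>2)"
    using weight[of 1 "z k - z0"] weight[of "real k + 1" "g (z k)"] weight[of "real k + 1" "\<delta> k"]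
    unfolding power_mult_distrib by simp
  also have "\<dots> \<le> 3 * ((8 * (norm (z0 - zs))\<^sup>2 + 4 * error_sum k) + (8 * (norm (z0 - zs))\<^sup>2 + 40 * error_sum k)
                     + (real k + 1)\<^sup>2 * (norm (\<delta> k))\<^sup>2)"
  proof -
    have "(real k + 1)\<^sup>2 * (norm (g (z k)))\<^sup>2 \<le> q * (norm (g (z k)))\<^sup>2"
      by (intro mult_right_mono) (auto simp: q_def power2_eq_square)
    then show ?thesis
      using dist_anchor_squared_le[of k] residual_bound[of k] by (simp add: q_def)
  qed
  also have "\<dots> \<le> 48 * (norm (z0 - zs))\<^sup>2 + 132 * error_sum (Suc k)"
    using sum_nonneg[of "{..<k}" "\<lambda>i. (real i + 1)\<^sup>2 * (norm (\<delta> i))\<^sup>2"]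
    by (simp add: error_sum_def)
  finally show ?thesis by (simp add: q_def)
qed

lemma scaled_error_sum_le:
  assumes "\<And>k. L\<^sup>2 * (norm (\<delta> k))\<^sup>2 \<le> 2 * h k + (\<gamma> k)\<^sup>2"
  shows "L\<^sup>2 * error_sum j \<le> (\<Sum>i<j. (real i + 1)\<^sup>2 * (2 * h i + (\<gamma> i)\<^sup>2))"
  unfolding error_sum_def sum_distrib_left
  using assms by (intro sum_mono) (simp add: mult.left_commute)

end

section \<open>Stochastic errors\<close>

lemma (in prob_space) nn_integral_affine_le:
  fixes h :: "'i \<Rightarrow> 'a \<Rightarrow> real"
  assumes "finite I"
    and h_meas: "\<And>i. i \<in> I \<Longrightarrow> h i \<in> borel_measurable M"
    and h_nonneg: "\<And>i x. i \<in> I \<Longrightarrow> 0 \<le> h i x"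
    and h_int: "\<And>i. i \<in> I \<Longrightarrow> (\<integral>\<^sup>+x. ennreal (h i x) \<partial>M) \<le> ennreal (s i)"
    and "\<And>i. i \<in> I \<Longrightarrow> 0 \<le> s i" and "\<And>i. i \<in> I \<Longrightarrow> 0 \<le> a i" and "0 \<le> c"
  shows "(\<integral>\<^sup>+x. ennreal (c + (\<Sum>i\<in>I. a i * h i x)) \<partial>M) \<le> ennreal (c + (\<Sum>i\<in>I. a i * s i))"
proof -
  have split: "ennreal (c + (\<Sum>i\<in>I. a i * t i)) = ennreal c + (\<Sum>i\<in>I. ennreal (a i) * ennreal (t i))"
    if "\<And>i. i \<in> I \<Longrightarrow> 0 \<le> t i" for t :: "'i \<Rightarrow> real"
  proof -
    have "ennreal (\<Sum>i\<in>I. a i * t i) = (\<Sum>i\<in>I. ennreal (a i * t i))"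
      using that assms(6) by (intro sum_ennreal[symmetric]) simp
    then show ?thesis
      using that assms(6,7) by (simp add: ennreal_plus sum_nonneg ennreal_mult)
  qed
  have "(\<integral>\<^sup>+x. ennreal (c + (\<Sum>i\<in>I. a i * h i x)) \<partial>M)
      = (\<integral>\<^sup>+x. ennreal c + (\<Sum>i\<in>I. ennreal (a i) * ennreal (h i x)) \<partial>M)"
    using h_nonneg by (intro nn_integral_cong split) auto
  also have "\<dots> = ennreal c + (\<Sum>i\<in>I. ennreal (a i) * (\<integral>\<^sup>+x. ennreal (h i x) \<partial>M))"
    using h_meas
    by (simp add: nn_integral_add nn_integral_sum nn_integral_cmult emeasure_space_1)
  also have "\<dots> \<le> ennreal c + (\<Sum>i\<in>I. ennreal (a i) * ennreal (s i))"
    using h_int by (intro add_left_mono sum_mono mult_left_mono) auto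
  also have "\<dots> = ennreal (c + (\<Sum>i\<in>I. a i * s i))"
    using assms(5) by (simp add: split)
  finally show ?thesis .
qed

lemma square_le_add_sqrt_square:
  fixes x S a b p r :: real
  assumes "0 \<le> x" "0 \<le> S" "0 \<le> p" "0 \<le> r" "a \<le> p\<^sup>2" "b \<le> r\<^sup>2"
  shows "a * x\<^sup>2 + b * S \<le> (p * x + r * sqrt S)\<^sup>2"
proof -
  have "a * x\<^sup>2 + b * S \<le> p\<^sup>2 * x\<^sup>2 + r\<^sup>2 * S"
    using assms by (intro add_mono mult_right_mono) auto
  also have "\<dots> \<le> p\<^sup>2 * x\<^sup>2 + r\<^sup>2 * S + 2 * (p * x) * (r * sqrt S)"
    using assms by simp
  also have "\<dots> = (p * x + r * sqrt S)\<^sup>2"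
    using \<open>0 \<le> S\<close> by (simp add: power2_eq_square algebra_simps)
  finally show ?thesis .
qed

lemma (in prob_space) nn_integral_noise_le:
  fixes h :: "nat \<Rightarrow> 'a \<Rightarrow> real" and Y :: "'a \<Rightarrow> real"
  assumes "finite I"
    and h_meas: "\<And>i. h i \<in> borel_measurable M" and h_nonneg: "\<And>i x. 0 \<le> h i x"
    and h_int: "\<And>i. (\<integral>\<^sup>+x. ennreal (h i x) \<partial>M) \<le> ennreal ((\<sigma> i)\<^sup>2 / 2)"
    and \<sigma>_nonneg: "\<And>i. 0 \<le> \<sigma> i" and \<gamma>_nonneg: "\<And>i. 0 \<le> \<gamma> i"
    and "0 \<le> A" "0 \<le> B" "0 < q"
    and Y: "\<And>x. x \<in> space M \<Longrightarrow> Y x \<le> (A + B * (\<Sum>i\<in>I. (real i + 1)\<^sup>2 * (2 * h i x + (\<gamma> i)\<^sup>2))) / q"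
  shows "(\<integral>\<^sup>+x. ennreal (Y x) \<partial>M) \<le> ennreal ((A + B * (\<Sum>i\<in>I. (real i + 1)\<^sup>2 * (\<sigma> i + \<gamma> i)\<^sup>2)) / q)"
proof -
  define c where "c = (A + B * (\<Sum>i\<in>I. (real i + 1)\<^sup>2 * (\<gamma> i)\<^sup>2)) / q"
  define a where "a i = 2 * B * (real i + 1)\<^sup>2 / q" for i
  have affine: "(A + B * (\<Sum>i\<in>I. (real i + 1)\<^sup>2 * (2 * t i + (\<gamma> i)\<^sup>2))) / q = c + (\<Sum>i\<in>I. a i * t i)"
    for t :: "nat \<Rightarrow> real"
    by (simp add: c_def a_def algebra_simps sum.distrib sum_distrib_left add_divide_distrib
        sum_divide_distrib)
  have "(\<integral>\<^sup>+x. ennreal (Y x) \<partial>M) \<le> (\<integral>\<^sup>+x. ennreal (c + (\<Sum>i\<in>I. a i * h i x)) \<partial>M)"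
    using Y by (intro nn_integral_mono ennreal_leI) (simp add: affine)
  also have "\<dots> \<le> ennreal (c + (\<Sum>i\<in>I. a i * ((\<sigma> i)\<^sup>2 / 2)))"
    using \<open>finite I\<close> h_meas h_nonneg h_int \<open>0 \<le> A\<close> \<open>0 \<le> B\<close> \<open>0 < q\<close>
    by (intro nn_integral_affine_le) (auto simp: a_def c_def sum_nonneg)
  also have "\<dots> \<le> ennreal ((A + B * (\<Sum>i\<in>I. (real i + 1)\<^sup>2 * (\<sigma> i + \<gamma> i)\<^sup>2)) / q)"
  proof (rule ennreal_leI)
    have "(\<Sum>i\<in>I. (real i + 1)\<^sup>2 * (2 * ((\<sigma> i)\<^sup>2 / 2) + (\<gamma> i)\<^sup>2))
        \<le> (\<Sum>i\<in>I. (real i + 1)\<^sup>2 * (\<sigma> i + \<gamma> i)\<^sup>2)"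
      using \<sigma>_nonneg \<gamma>_nonneg
      by (intro sum_mono mult_left_mono) (auto simp: power2_eq_square algebra_simps)
    then show "c + (\<Sum>i\<in>I. a i * ((\<sigma> i)\<^sup>2 / 2))
        \<le> (A + B * (\<Sum>i\<in>I. (real i + 1)\<^sup>2 * (\<sigma> i + \<gamma> i)\<^sup>2)) / q"
      unfolding affine[symmetric] using \<open>0 \<le> B\<close> \<open>0 < q\<close>
      by (intro divide_right_mono add_left_mono mult_left_mono) auto
  qed
  finally show ?thesis .
qed

locale stochastic_inexact_halpern = prob_space M
  for M :: "'a measure" +
  fixes g :: "'b::real_inner \<Rightarrow> 'b" and z \<delta> :: "nat \<Rightarrow> 'a \<Rightarrow> 'b" and z0 zs :: 'b
    and L :: real and h :: "nat \<Rightarrow> 'a \<Rightarrow> real" and \<sigma> \<gamma> :: "nat \<Rightarrow> real"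
  assumes halpern: "\<And>\<omega>. \<omega> \<in> space M \<Longrightarrow> inexact_halpern g (\<lambda>k. z k \<omega>) (\<lambda>k. \<delta> k \<omega>) z0 zs"
    and L_pos: "0 < L"
    and noise: "\<And>k \<omega>. \<omega> \<in> space M \<Longrightarrow> L\<^sup>2 * (norm (\<delta> k \<omega>))\<^sup>2 \<le> 2 * h k \<omega> + (\<gamma> k)\<^sup>2"
    and h_meas: "\<And>k. h k \<in> borel_measurable M" and h_nonneg: "\<And>k \<omega>. 0 \<le> h k \<omega>"
    and h_int: "\<And>k. (\<integral>\<^sup>+\<omega>. ennreal (h k \<omega>) \<partial>M) \<le> ennreal ((\<sigma> k)\<^sup>2 / 2)"
    and \<sigma>_nonneg: "\<And>k. 0 \<le> \<sigma> k" and \<gamma>_nonneg: "\<And>k. 0 \<le> \<gamma> k"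
begin

theorem expected_residual_bound:
  "(\<integral>\<^sup>+\<omega>. ennreal ((norm (L *\<^sub>R g (z k \<omega>)))\<^sup>2) \<partial>M)
    \<le> ennreal ((7 * L * norm (z0 - zs) + 10 * sqrt (\<Sum>i<k. (real i + 1)\<^sup>2 * (\<sigma> i + \<gamma> i)\<^sup>2))\<^sup>2
               / ((real k + 1) * (real k + 2)))"
proof -
  define D where "D = L * norm (z0 - zs)"
  define q where "q = (real k + 1) * (real k + 2)"
  define S where "S = (\<Sum>i<k. (real i + 1)\<^sup>2 * (\<sigma> i + \<gamma> i)\<^sup>2)"
  have "0 < q" by (simp add: q_def)
  have "(norm (L *\<^sub>R g (z k \<omega>)))\<^sup>2
      \<le> (8 * D\<^sup>2 + 40 * (\<Sum>i<k. (real i + 1)\<^sup>2 * (2 * h i \<omega> + (\<gamma> i)\<^sup>2))) / q"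
    if "\<omega> \<in> space M" for \<omega>
  proof -
    interpret inexact_halpern g "\<lambda>k. z k \<omega>" "\<lambda>k. \<delta> k \<omega>" z0 zs by (rule halpern[OF that])
    have "q * (norm (L *\<^sub>R g (z k \<omega>)))\<^sup>2 = L\<^sup>2 * ((real k + 1) * (real k + 2) * (norm (g (z k \<omega>)))\<^sup>2)"
      using L_pos by (simp add: q_def power_mult_distrib)
    also have "\<dots> \<le> L\<^sup>2 * (8 * (norm (z0 - zs))\<^sup>2 + 40 * error_sum k)"
      using residual_bound[of k] by (intro mult_left_mono) auto
    also have "\<dots> \<le> 8 * D\<^sup>2 + 40 * (\<Sum>i<k. (real i + 1)\<^sup>2 * (2 * h i \<omega> + (\<gamma> i)\<^sup>2))"
      using scaled_error_sum_le[OF noise[OF that], of k]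
      by (simp add: D_def power_mult_distrib algebra_simps)
    finally show ?thesis using \<open>0 < q\<close> by (simp add: field_simps)
  qed
  then have "(\<integral>\<^sup>+\<omega>. ennreal ((norm (L *\<^sub>R g (z k \<omega>)))\<^sup>2) \<partial>M) \<le> ennreal ((8 * D\<^sup>2 + 40 * S) / q)"
    unfolding S_def using \<open>0 < q\<close>
    by (intro nn_integral_noise_le[OF _ h_meas h_nonneg h_int \<sigma>_nonneg \<gamma>_nonneg]) auto
  also have "\<dots> \<le> ennreal ((7 * D + 10 * sqrt S)\<^sup>2 / q)"
  proof -
    have "8 * D\<^sup>2 + 40 * S \<le> (7 * D + 10 * sqrt S)\<^sup>2"
      using L_pos by (intro square_le_add_sqrt_square) (auto simp: D_def S_def sum_nonneg)
    then show ?thesis using \<open>0 < q\<close> by (intro ennreal_leI divide_right_mono) auto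
  qed
  finally show ?thesis by (simp add: D_def S_def q_def mult.assoc)
qed

theorem expected_step_bound:
  "(\<integral>\<^sup>+\<omega>. ennreal ((norm (z (Suc k) \<omega> - z k \<omega>))\<^sup>2) \<partial>M)
    \<le> ennreal (8 * (7 * L * norm (z0 - zs) + 11 * sqrt (\<Sum>i\<le>k. (real i + 1)\<^sup>2 * (\<sigma> i + \<gamma> i)\<^sup>2))\<^sup>2
               / (L\<^sup>2 * (real k + 1) * (real k + 2)))"
proof -
  define D where "D = L * norm (z0 - zs)"
  define q where "q = (real k + 1) * (real k + 2)"
  define S where "S = (\<Sum>i<Suc k. (real i + 1)\<^sup>2 * (\<sigma> i + \<gamma> i)\<^sup>2)"
  have "0 < q" by (simp add: q_def)
  have "(norm (z (Suc k) \<omega> - z k \<omega>))\<^sup>2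
      \<le> (48 * D\<^sup>2 + 132 * (\<Sum>i<Suc k. (real i + 1)\<^sup>2 * (2 * h i \<omega> + (\<gamma> i)\<^sup>2))) / (L\<^sup>2 * q)"
    if "\<omega> \<in> space M" for \<omega>
  proof -
    interpret inexact_halpern g "\<lambda>k. z k \<omega>" "\<lambda>k. \<delta> k \<omega>" z0 zs by (rule halpern[OF that])
    have "L\<^sup>2 * q * (norm (z (Suc k) \<omega> - z k \<omega>))\<^sup>2
        \<le> L\<^sup>2 * (48 * (norm (z0 - zs))\<^sup>2 + 132 * error_sum (Suc k))"
      using step_bound[of k] unfolding mult.assoc by (intro mult_left_mono) (auto simp: q_def)
    also have "\<dots> \<le> 48 * D\<^sup>2 + 132 * (\<Sum>i<Suc k. (real i + 1)\<^sup>2 * (2 * h i \<omega> + (\<gamma> i)\<^sup>2))"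
      using scaled_error_sum_le[OF noise[OF that], of "Suc k"]
      by (simp add: D_def power_mult_distrib algebra_simps)
    finally show ?thesis using \<open>0 < q\<close> L_pos by (simp add: field_simps)
  qed
  then have "(\<integral>\<^sup>+\<omega>. ennreal ((norm (z (Suc k) \<omega> - z k \<omega>))\<^sup>2) \<partial>M)
      \<le> ennreal ((48 * D\<^sup>2 + 132 * S) / (L\<^sup>2 * q))"
    unfolding S_def using \<open>0 < q\<close> L_pos
    by (intro nn_integral_noise_le[OF _ h_meas h_nonneg h_int \<sigma>_nonneg \<gamma>_nonneg]) auto
  also have "\<dots> \<le> ennreal (8 * (7 * D + 11 * sqrt S)\<^sup>2 / (L\<^sup>2 * q))"
  proof -
    have "6 * D\<^sup>2 + 33 / 2 * S \<le> (7 * D + 11 * sqrt S)\<^sup>2"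
      using L_pos by (intro square_le_add_sqrt_square) (auto simp: D_def S_def sum_nonneg)
    then show ?thesis using L_pos \<open>0 < q\<close> by (intro ennreal_leI divide_right_mono) auto
  qed
  finally show ?thesis by (simp add: D_def S_def q_def lessThan_Suc_atMost mult.assoc)
qed

end

theorem theorem5:
  fixes M :: "'w measure"
    and E :: "'z::euclidean_space \<Rightarrow> 'z set"
    and Fs :: "nat \<Rightarrow> 'z \<Rightarrow> 'z"
    and N :: nat and L0 \<alpha> :: real
    and zs z0 :: 'z
    and \<sigma> \<gamma> :: "nat \<Rightarrow> real"
    and z Ft zbar :: "nat \<Rightarrow> 'w \<Rightarrow> 'z"
  assumes prob: "prob_space M"
    and E_mm: "max_monotone_op E"
    and N_pos: "N \<ge> 1"
    and L0_pos: "L0 > 0"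
    and Fs_mm: "\<And>i. i < N \<Longrightarrow> max_monotone_op (sv_op (Fs i))"
    and Fs_coco: "\<And>i. i < N \<Longrightarrow> cocoercive (1 / L0) (Fs i)"
    and \<alpha>_pos: "0 < \<alpha>" and \<alpha>_bd: "\<alpha> < 4 / L0"
    and root: "(1 / \<alpha>) *\<^sub>R (zs - resolvent \<alpha> E
                 (zs - \<alpha> *\<^sub>R ((1 / real N) *\<^sub>R (\<Sum>i<N. Fs i zs)))) = 0"
    and \<sigma>_nn: "\<And>k. \<sigma> k \<ge> 0" and \<gamma>_nn: "\<And>k. \<gamma> k \<ge> 0"
    and z_meas: "\<And>k. z k \<in> borel_measurable M"
    and Ft_meas: "\<And>k. Ft k \<in> borel_measurable M"
    and zbar_meas: "\<And>k. zbar k \<in> borel_measurable M"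
    and z_init: "\<And>\<omega>. \<omega> \<in> space M \<Longrightarrow> z 0 \<omega> = z0"
    and est: "\<And>k. (\<integral>\<^sup>+ \<omega>. ennreal ((norm ((1 / real N) *\<^sub>R (\<Sum>i<N. Fs i (z k \<omega>))
                                   - Ft k \<omega>))\<^sup>2) \<partial>M) \<le> ennreal ((\<sigma> k)\<^sup>2 / 2)"
    and inexact: "\<And>k \<omega>. \<omega> \<in> space M \<Longrightarrow>
           norm (resolvent \<alpha> E (z k \<omega> - \<alpha> *\<^sub>R Ft k \<omega>) - zbar k \<omega>)
             \<le> sqrt 2 / 2 * \<alpha> * \<gamma> k"
    and step: "\<And>k \<omega>. \<omega> \<in> space M \<Longrightarrow>
           z (Suc k) \<omega> = (1 / real (k + 2)) *\<^sub>R z0 + (1 - 1 / real (k + 2)) *\<^sub>R z k \<omega>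
             - ((1 - 1 / real (k + 2)) / (4 / (\<alpha> * (4 - \<alpha> * L0))))
                 *\<^sub>R ((1 / \<alpha>) *\<^sub>R (z k \<omega> - zbar k \<omega>))"
  shows "\<forall>k. (\<integral>\<^sup>+ \<omega>. ennreal ((norm ((1 / \<alpha>) *\<^sub>R (z k \<omega> - resolvent \<alpha> E
                 (z k \<omega> - \<alpha> *\<^sub>R ((1 / real N) *\<^sub>R (\<Sum>i<N. Fs i (z k \<omega>)))))))\<^sup>2) \<partial>M)
           \<le> ennreal ((7 * (4 / (\<alpha> * (4 - \<alpha> * L0))) * norm (z0 - zs)
                  + 10 * sqrt (\<Sum>i<k. (real i + 1)\<^sup>2 * (\<sigma> i + \<gamma> i)\<^sup>2))\<^sup>2
                / ((real k + 1) * (real k + 2)))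
         \<and> (\<integral>\<^sup>+ \<omega>. ennreal ((norm (z (Suc k) \<omega> - z k \<omega>))\<^sup>2) \<partial>M)
           \<le> ennreal (8 * (7 * (4 / (\<alpha> * (4 - \<alpha> * L0))) * norm (z0 - zs)
                  + 11 * sqrt (\<Sum>i\<le>k. (real i + 1)\<^sup>2 * (\<sigma> i + \<gamma> i)\<^sup>2))\<^sup>2
                / ((4 / (\<alpha> * (4 - \<alpha> * L0)))\<^sup>2 * (real k + 1) * (real k + 2)))"
proof -
  define L where "L = 4 / (\<alpha> * (4 - \<alpha> * L0))"
  define F where "F x = (1 / real N) *\<^sub>R (\<Sum>i<N. Fs i x)" for x
  define G where "G x = (1 / \<alpha>) *\<^sub>R (x - resolvent \<alpha> E (x - \<alpha> *\<^sub>R F x))" for x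
  define g where "g x = (1 / L) *\<^sub>R G x" for x
  define \<delta> where "\<delta> k \<omega> = (1 / L) *\<^sub>R ((1 / \<alpha>) *\<^sub>R (z k \<omega> - zbar k \<omega>) - G (z k \<omega>))" for k \<omega>
  define h where "h k \<omega> = (norm (F (z k \<omega>) - Ft k \<omega>))\<^sup>2" for k \<omega>
  have "\<alpha> * L0 < 4" using \<alpha>_bd L0_pos by (simp add: field_simps)
  then have "0 < L" using \<alpha>_pos by (simp add: L_def)
  have F_coco: "cocoercive (1 / L0) F"
    unfolding F_def using Fs_coco L0_pos by (intro cocoercive_average) auto
  have "(\<alpha> * (4 - \<alpha> * L0) / 4) / (1 / L) = 1"
    using \<alpha>_pos \<open>\<alpha> * L0 < 4\<close> by (simp add: L_def)
  then have g_coco: "cocoercive 1 g"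
    using cocoercive_scaleR[OF forward_backward_residual_cocoercive[OF E_mm \<alpha>_pos L0_pos F_coco],
        of "1 / L"] \<open>0 < L\<close>
    by (simp add: g_def[abs_def] G_def[abs_def])
  have halpern: "inexact_halpern g (\<lambda>k. z k \<omega>) (\<lambda>k. \<delta> k \<omega>) z0 zs" if "\<omega> \<in> space M" for \<omega>
  proof
    show "g zs = 0" using root by (simp add: g_def G_def F_def)
    show "z 0 \<omega> = z0" using z_init[OF that] .
    fix k
    have g_plus_\<delta>: "g (z k \<omega>) + \<delta> k \<omega> = (1 / L) *\<^sub>R ((1 / \<alpha>) *\<^sub>R (z k \<omega> - zbar k \<omega>))"
      by (simp add: g_def \<delta>_def algebra_simps)
    show "z (Suc k) \<omega>
        = (1 / real (k + 2)) *\<^sub>R z0 + (1 - 1 / real (k + 2)) *\<^sub>R (z k \<omega> - g (z k \<omega>) - \<delta> k \<omega>)"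
      unfolding step[OF that] L_def[symmetric] diff_diff_eq g_plus_\<delta> by (simp add: scaleR_diff_right)
  qed (rule g_coco)
  have noise: "L\<^sup>2 * (norm (\<delta> k \<omega>))\<^sup>2 \<le> 2 * h k \<omega> + (\<gamma> k)\<^sup>2" if "\<omega> \<in> space M" for k \<omega>
  proof -
    have "L\<^sup>2 * (norm (\<delta> k \<omega>))\<^sup>2 = (norm ((1 / \<alpha>) *\<^sub>R (z k \<omega> - zbar k \<omega>) - G (z k \<omega>)))\<^sup>2"
      using \<open>0 < L\<close> by (simp add: \<delta>_def power_mult_distrib power_divide)
    also have "\<dots> \<le> 2 * h k \<omega> + 2 * (sqrt 2 / 2 * \<alpha> * \<gamma> k / \<alpha>)\<^sup>2"
      unfolding G_def h_def by (rule forward_backward_inexact_residual[OF E_mm \<alpha>_pos inexact[OF that]])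
    also have "2 * (sqrt 2 / 2 * \<alpha> * \<gamma> k / \<alpha>)\<^sup>2 = (\<gamma> k)\<^sup>2"
      using \<alpha>_pos by (simp add: power_mult_distrib power_divide)
    finally show ?thesis .
  qed
  have "continuous_on UNIV F"
    using cocoercive_imp_lipschitz[OF F_coco] L0_pos by (simp add: lipschitz_on_continuous_on)
  then have h_meas: "h k \<in> borel_measurable M" for k
    using borel_measurable_continuous_on[OF _ z_meas] Ft_meas unfolding h_def by measurable
  interpret stochastic_inexact_halpern M g z \<delta> z0 zs L h \<sigma> \<gamma>
    using prob halpern \<open>0 < L\<close> noise h_meas \<sigma>_nn \<gamma>_nn est
    by (intro stochastic_inexact_halpern.intro stochastic_inexact_halpern_axioms.intro)
       (auto simp: h_def F_def)
  have "L *\<^sub>R g x = G x" for x using \<open>0 < L\<close> by (simp add: g_def)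
  then show ?thesis
    using expected_residual_bound expected_step_bound by (simp add: G_def F_def L_def)
qed

end
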